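(* Let $V$ be a Euclidean vector space of dimension $m+1$ with $m\geq 1$, and let $S(V)=\{v\in V : \|v\|=1\}$ be its unit sphere. Suppose that $f_1,\ldots,f_m : S(V)\to\mathbb{R}$ are continuous functions such that $f_i(-v)=-f_i(v)$ for all $v\in S(V)$ and all $i=1,\ldots,m$. Suppose further that the open subset $$\Omega=\{v\in S(V) : |f_i(v)|<1 \text{ for all } i=1,\ldots,m\}$$ of $S(V)$ can be written as a disjoint union $\Omega=\Omega_+\sqcup\Omega_-$ of two open subsets of $S(V)$ satisfying $\Omega_-=-\Omega_+=\{-v : v\in\Omega_+\}$. Then the image of the continuous map $(f_1,\ldots,f_m): S(V)\to\mathbb{R}^m$ contains the cube $[-1,1]^m$; that is, for every $(t_1,\ldots,t_m)\in[-1,1]^m$ there exists $v\in S(V)$ with $f_i(v)=t_i$ for all $i=1,\ldots,m$. *)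

theory Defs
  imports "HOL-Analysis.Analysis"
begin

end

theory Submission
  imports Defs "HOL-Homology.Invariance_of_Domain"
begin

text \<open>
  Suppose a point \<open>t\<close> of the open cube is missed. Since \<open>\<Omega>p\<close> and \<open>\<Omega>m = - \<Omega>p\<close> are disjoint
  and open, the difference of the distances to their complements is an odd continuous
  function \<open>s\<close>, positive on \<open>\<Omega>p\<close> and negative on \<open>\<Omega>m\<close>. The map \<open>F = (f, s)\<close> is odd, and the
  straight-line homotopy from \<open>F\<close> to \<open>G = (f - t, 0)\<close> never vanishes: at a zero with \<open>s = 0\<close>
  the point lies outside \<open>\<Omega>\<close>, so some \<open>\<bar>f i\<bar> \<ge> 1 > \<bar>u * t i\<bar>\<close>, and at a zero with \<open>u = 1\<close> we
  would have \<open>f = t\<close>. After normalisation \<open>F\<close> is an odd self-map of the sphere, hence not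
  homotopic to a non-surjective map (Borsuk--Ulam), but \<open>G\<close> misses the last coordinate
  direction. The closed cube follows by compactness.

  Borsuk--Ulam is proved in the form "an odd self-map of \<open>S\<^sup>k\<close> has odd mod 2 degree", by
  induction along the coordinate spheres \<open>S\<^sup>0 \<subseteq> S\<^sup>1 \<subseteq> \<dots>\<close> with
  \<open>Borsuk_odd_mapping_degree_step\<close>. An odd map of \<open>S\<^sup>k\<^sup>+\<^sup>1\<close> is homotopic to a smooth odd
  map \<open>h\<close>; by Sard, \<open>h(S\<^sup>k)\<close> misses some point \<open>d\<close> of \<open>S\<^sup>k\<^sup>+\<^sup>1\<close>, hence also \<open>-d\<close>, so it lies
  in a band \<open>\<bar>y \<bullet> d\<bar> \<le> c < 1\<close>. An odd self-map \<open>\<Psi>\<close> of \<open>S\<^sup>k\<^sup>+\<^sup>1\<close> collapsing this band onto \<open>S\<^sup>k\<close> makes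
  \<open>\<Psi> \<circ> h\<close> preserve \<open>S\<^sup>k\<close>, and the degree is multiplicative.
\<close>

section \<open>Smoothing and compressing odd maps of spheres\<close>

lemma homotopic_sgn_linear:
  fixes f g :: "'a::topological_space \<Rightarrow> 'b::real_normed_vector"
  assumes W: "subspace W" and contf: "continuous_on X f" and contg: "continuous_on X g"
    and fW: "f ` X \<subseteq> W" and gW: "g ` X \<subseteq> W"
    and nz: "\<And>x. x \<in> X \<Longrightarrow> 0 \<notin> closed_segment (f x) (g x)"
  shows "homotopic_with_canon (\<lambda>_. True) X (sphere 0 1 \<inter> W) (\<lambda>x. sgn (f x)) (\<lambda>x. sgn (g x))"
proof -
  have "homotopic_with_canon (\<lambda>_. True) X (W - {0}) f g"
  proof (rule homotopic_with_linear[OF contf contg])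
    fix x assume x: "x \<in> X"
    have "closed_segment (f x) (g x) \<subseteq> W"
      using x fW gW W by (intro closed_segment_subset subspace_imp_convex) auto
    then show "closed_segment (f x) (g x) \<subseteq> W - {0}"
      using nz[OF x] by blast
  qed
  moreover have "continuous_on (W - {0}) sgn"
    using continuous_on_sgn[OF continuous_on_id] by auto
  moreover have "sgn \<in> W - {0} \<rightarrow> sphere 0 1 \<inter> W"
    using W by (auto simp: norm_sgn sgn_div_norm subspace_scale)
  ultimately show ?thesis
    using homotopic_with_compose_continuous_left[where h=sgn] by (simp add: o_def)
qed

lemma odd_polynomial_approximation:
  fixes \<phi> :: "'a::euclidean_space \<Rightarrow> 'b::euclidean_space"
  assumes S: "compact S" "\<And>x. x \<in> S \<Longrightarrow> -x \<in> S"
    and cont: "continuous_on S \<phi>" and odd: "\<And>x. x \<in> S \<Longrightarrow> \<phi> (-x) = - \<phi> x"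
    and W: "subspace W" "\<phi> ` S \<subseteq> W" and "0 < e"
  obtains g where "polynomial_function g" "\<And>x. g (-x) = - g x" "g ` S \<subseteq> W"
    "\<And>x. x \<in> S \<Longrightarrow> norm (\<phi> x - g x) < e"
proof -
  obtain p where p: "polynomial_function p" "p ` S \<subseteq> W"
    and close: "\<And>x. x \<in> S \<Longrightarrow> norm (\<phi> x - p x) < e"
    using Stone_Weierstrass_polynomial_function_subspace[OF S(1) cont \<open>0 < e\<close> W] by blast
  define g where "g x = (1/2) *\<^sub>R (p x - p (-x))" for x
  show thesis
  proof
    have "polynomial_function (p \<circ> uminus)"
      by (intro polynomial_function_compose p polynomial_function_minus polynomial_function_id)
    then show "polynomial_function g"
      unfolding g_def using p by (auto simp: o_def)
    show "g (-x) = - g x" for x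
      by (simp add: g_def algebra_simps)
    show "g ` S \<subseteq> W"
      using p S(2) W(1) by (auto simp: g_def intro!: subspace_scale subspace_diff)
    show "norm (\<phi> x - g x) < e" if x: "x \<in> S" for x
    proof -
      have "\<phi> x - g x = (1/2) *\<^sub>R ((\<phi> x - p x) - (\<phi> (-x) - p (-x)))"
        using odd[OF x] by (simp add: g_def algebra_simps flip: scaleR_add_left)
      also have "norm \<dots> \<le> (1/2) * (norm (\<phi> x - p x) + norm (\<phi> (-x) - p (-x)))"
        by (simp add: norm_triangle_ineq4)
      also have "\<dots> < e"
        using close[OF x] close[OF S(2)[OF x]] by simp
      finally show ?thesis .
    qed
  qed
qed

lemma odd_sphere_map_homotopic_smooth:
  fixes \<phi> :: "'a::euclidean_space \<Rightarrow> 'a"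
  assumes W: "subspace W"
    and cont: "continuous_on (sphere 0 1 \<inter> W) \<phi>" and \<phi>W: "\<phi> ` (sphere 0 1 \<inter> W) \<subseteq> sphere 0 1 \<inter> W"
    and odd: "\<And>x. x \<in> sphere 0 1 \<inter> W \<Longrightarrow> \<phi> (-x) = - \<phi> x"
  obtains h where "h differentiable_on sphere 0 1 \<inter> W" "h ` (sphere 0 1 \<inter> W) \<subseteq> sphere 0 1 \<inter> W"
    "\<And>x. h (-x) = - h x" "homotopic_with_canon (\<lambda>_. True) (sphere 0 1 \<inter> W) (sphere 0 1 \<inter> W) \<phi> h"
proof -
  have "compact (sphere 0 1 \<inter> W)" "\<And>x. x \<in> sphere 0 1 \<inter> W \<Longrightarrow> -x \<in> sphere 0 1 \<inter> W"
    using W subspace_neg by (auto simp: closed_subspace compact_Int_closed)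
  moreover have "\<phi> ` (sphere 0 1 \<inter> W) \<subseteq> W"
    using \<phi>W by blast
  ultimately obtain g where g: "polynomial_function g" "\<And>x. g (-x) = - g x" "g ` (sphere 0 1 \<inter> W) \<subseteq> W"
    and close: "\<And>x. x \<in> sphere 0 1 \<inter> W \<Longrightarrow> norm (\<phi> x - g x) < 1"
    using odd_polynomial_approximation[OF _ _ cont odd W _ zero_less_one] by metis
  have norm\<phi>: "norm (\<phi> x) = 1" if "x \<in> sphere 0 1 \<inter> W" for x
    using \<phi>W that by (auto simp: image_subset_iff)
  have segment: "0 \<notin> closed_segment (\<phi> x) (g x)" if x: "x \<in> sphere 0 1 \<inter> W" for x
  proof
    assume "0 \<in> closed_segment (\<phi> x) (g x)"
    then have "norm (\<phi> x) \<le> norm (g x - \<phi> x)"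
      using segment_bound(1) by fastforce
    then show False
      using close[OF x] norm\<phi>[OF x] by (simp add: norm_minus_commute)
  qed
  then have gnz: "g x \<noteq> 0" if "x \<in> sphere 0 1 \<inter> W" for x
    using that by fastforce
  define h where "h = (\<lambda>x. sgn (g x))"
  show thesis
  proof
    show "h differentiable_on sphere 0 1 \<inter> W"
      unfolding h_def sgn_div_norm using gnz
      by (fastforce intro: derivative_intros differentiable_on_polynomial_function[OF g(1)]
          differentiable_on_compose[OF differentiable_on_polynomial_function[OF g(1)]])
    show "h ` (sphere 0 1 \<inter> W) \<subseteq> sphere 0 1 \<inter> W"
      using g(3) gnz W by (auto simp: h_def norm_sgn sgn_div_norm subspace_scale)
    show "h (-x) = - h x" for x
      by (simp add: h_def g(2) sgn_minus)
    have "continuous_on (sphere 0 1 \<inter> W) g"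
      using g(1) continuous_on_polymonial_function by blast
    then have "homotopic_with_canon (\<lambda>_. True) (sphere 0 1 \<inter> W) (sphere 0 1 \<inter> W) (\<lambda>x. sgn (\<phi> x)) h"
      unfolding h_def using \<phi>W g(3) segment by (intro homotopic_sgn_linear W cont) auto
    then show "homotopic_with_canon (\<lambda>_. True) (sphere 0 1 \<inter> W) (sphere 0 1 \<inter> W) \<phi> h"
      by (rule homotopic_with_eq) (simp_all add: sgn_div_norm norm\<phi>)
  qed
qed

lemma odd_sphere_map_homotopic_missing_subsphere:
  fixes \<phi> :: "'a::euclidean_space \<Rightarrow> 'a"
  assumes U: "subspace U" and W: "subspace W" and UW: "dim U < dim W" "U \<subseteq> W"
    and cont: "continuous_on (sphere 0 1 \<inter> W) \<phi>" and \<phi>W: "\<phi> ` (sphere 0 1 \<inter> W) \<subseteq> sphere 0 1 \<inter> W"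
    and odd: "\<And>x. x \<in> sphere 0 1 \<inter> W \<Longrightarrow> \<phi> (-x) = - \<phi> x"
  obtains h d where "continuous_on (sphere 0 1 \<inter> W) h" "h ` (sphere 0 1 \<inter> W) \<subseteq> sphere 0 1 \<inter> W"
    "\<And>x. h (-x) = - h x"
    "homotopic_with_canon (\<lambda>_. True) (sphere 0 1 \<inter> W) (sphere 0 1 \<inter> W) \<phi> h"
    "d \<in> sphere 0 1 \<inter> W" "d \<notin> h ` (sphere 0 1 \<inter> U)"
proof -
  obtain h where h: "h differentiable_on sphere 0 1 \<inter> W" "h ` (sphere 0 1 \<inter> W) \<subseteq> sphere 0 1 \<inter> W"
    "\<And>x. h (-x) = - h x" "homotopic_with_canon (\<lambda>_. True) (sphere 0 1 \<inter> W) (sphere 0 1 \<inter> W) \<phi> h"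
    using odd_sphere_map_homotopic_smooth[OF W cont \<phi>W odd] by blast
  have "h differentiable_on sphere 0 1 \<inter> U"
    using UW(2) by (blast intro: differentiable_on_subset[OF h(1)])
  then have "h ` (sphere 0 1 \<inter> U) \<noteq> sphere 0 1 \<inter> W"
    by (rule spheremap_lemma1[OF U W UW])
  moreover have "h ` (sphere 0 1 \<inter> U) \<subseteq> sphere 0 1 \<inter> W"
    using h(2) UW(2) by blast
  ultimately obtain d where "d \<in> sphere 0 1 \<inter> W" "d \<notin> h ` (sphere 0 1 \<inter> U)"
    by blast
  then show thesis
    using that h(2-4) differentiable_imp_continuous_on[OF h(1)] by blast
qed

definition reflection :: "'a::real_inner \<Rightarrow> 'a \<Rightarrow> 'a" where
  "reflection u z = z - (2 * (z \<bullet> u) / (u \<bullet> u)) *\<^sub>R u"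

lemma norm_reflection [simp]: "norm (reflection u z) = norm z"
proof -
  have "reflection u z \<bullet> reflection u z = z \<bullet> z"
    by (cases "u \<bullet> u = 0")
      (simp_all add: reflection_def inner_diff_left inner_diff_right inner_commute
        power2_eq_square field_simps)
  then show ?thesis
    by (simp add: norm_eq_sqrt_inner)
qed

lemma reflection_minus: "reflection u (- z) = - reflection u z"
  by (simp add: reflection_def algebra_simps)

lemma reflection_in_subspace: "subspace W \<Longrightarrow> u \<in> W \<Longrightarrow> z \<in> W \<Longrightarrow> reflection u z \<in> W"
  by (simp add: reflection_def subspace_diff subspace_scale)

lemma continuous_on_reflection [continuous_intros]:
  "continuous_on A f \<Longrightarrow> continuous_on A (\<lambda>x. reflection u (f x))"
  unfolding reflection_def divide_inverse by (intro continuous_intros)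

lemma inner_reflection_diff:
  assumes "norm d = 1" "norm e = 1"
  shows "reflection (d - e) z \<bullet> e = z \<bullet> d"
proof (cases "d = e")
  case False
  have unit: "d \<bullet> d = 1" "e \<bullet> e = 1"
    using assms by (simp_all add: norm_eq_1)
  then have dd: "(d - e) \<bullet> (d - e) = 2 - 2 * (d \<bullet> e)" and de: "(d - e) \<bullet> e = d \<bullet> e - 1"
    by (simp_all add: inner_diff_left inner_diff_right inner_commute)
  have "(d - e) \<bullet> (d - e) \<noteq> 0"
    using False by simp
  then have nz: "2 - 2 * (d \<bullet> e) \<noteq> 0"
    by (simp add: dd)
  have "reflection (d - e) z \<bullet> e
      = z \<bullet> e - 2 * (z \<bullet> (d - e)) / ((d - e) \<bullet> (d - e)) * ((d - e) \<bullet> e)"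
    by (simp only: reflection_def inner_diff_left[of z] inner_scaleR_left)
  also have "\<dots> = z \<bullet> e + z \<bullet> (d - e)"
    unfolding dd de using nz by (simp add: field_simps)
  finally show ?thesis
    by (simp add: inner_diff_right)
qed (simp add: reflection_def)

lemma sphere_band_squeeze:
  fixes d :: "'a::real_inner"
  assumes W: "subspace W" "d \<in> W" and d: "norm d = 1" and c: "0 \<le> c" "c < 1"
  obtains w where "continuous_on UNIV w" "\<And>y. w (-y) = - w y" "\<And>y. norm y = 1 \<Longrightarrow> w y \<noteq> 0"
    "\<And>y. y \<in> W \<Longrightarrow> w y \<in> W" "\<And>y. \<bar>y \<bullet> d\<bar> \<le> c \<Longrightarrow> w y \<bullet> d = 0"
proof
  \<comment> \<open>\<open>\<kappa>\<close> is odd, vanishes on \<open>[-c, c]\<close> and fixes \<open>\<plusminus>1\<close>.\<close>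
  define \<kappa> where "\<kappa> a = (max 0 (a - c) - max 0 (- a - c)) / (1 - c)" for a
  define w where "w y = \<kappa> (y \<bullet> d) *\<^sub>R d + (y - (y \<bullet> d) *\<^sub>R d)" for y
  have w_d: "w y \<bullet> d = \<kappa> (y \<bullet> d)" for y
    using d by (simp add: w_def inner_add_left inner_diff_left norm_eq_1)
  show "continuous_on UNIV w"
    unfolding w_def \<kappa>_def using c by (intro continuous_intros) auto
  show "w (- y) = - w y" for y
  proof -
    have "\<kappa> (- a) = - \<kappa> a" for a
      by (simp add: \<kappa>_def minus_divide_left)
    then show ?thesis
      by (simp add: w_def algebra_simps)
  qed
  show "w y \<noteq> 0" if y: "norm y = 1" for y
  proof
    assume w0: "w y = 0"
    then have \<kappa>0: "\<kappa> (y \<bullet> d) = 0"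
      using w_d[of y] by simp
    then have "y = (y \<bullet> d) *\<^sub>R d"
      using w0 by (simp add: w_def)
    then have "\<bar>y \<bullet> d\<bar> = 1"
      using y d by (metis mult.right_neutral norm_scaleR)
    then show False
      using \<kappa>0 c by (auto simp: \<kappa>_def abs_if split: if_splits)
  qed
  show "w y \<in> W" if "y \<in> W" for y
    using W that unfolding w_def by (intro subspace_add subspace_scale subspace_diff)
  show "w y \<bullet> d = 0" if "\<bar>y \<bullet> d\<bar> \<le> c" for y
    using that by (simp add: w_d \<kappa>_def)
qed

lemma sphere_band_collapse:
  fixes d e :: "'a::real_inner"
  assumes W: "subspace W" and d: "d \<in> sphere 0 1 \<inter> W" and e: "e \<in> sphere 0 1 \<inter> W"
    and c: "0 \<le> c" "c < 1"
  obtains \<Psi> where "continuous_on (sphere 0 1 \<inter> W) \<Psi>" "\<Psi> ` (sphere 0 1 \<inter> W) \<subseteq> sphere 0 1 \<inter> W"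
    "\<And>y. \<Psi> (-y) = - \<Psi> y" "\<And>y. y \<in> sphere 0 1 \<inter> W \<Longrightarrow> \<bar>y \<bullet> d\<bar> \<le> c \<Longrightarrow> \<Psi> y \<bullet> e = 0"
proof -
  have "d \<in> W" "norm d = 1"
    using d by auto
  then obtain w where w: "continuous_on UNIV w" "\<And>y. w (-y) = - w y" "\<And>y. norm y = 1 \<Longrightarrow> w y \<noteq> 0"
    "\<And>y. y \<in> W \<Longrightarrow> w y \<in> W" "\<And>y. \<bar>y \<bullet> d\<bar> \<le> c \<Longrightarrow> w y \<bullet> d = 0"
    using sphere_band_squeeze[OF W _ _ c] by blast
  show thesis
  proof
    show "continuous_on (sphere 0 1 \<inter> W) (\<lambda>y. reflection (d - e) (sgn (w y)))"
      using w(3) by (intro continuous_intros continuous_on_subset[OF w(1)]) auto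
    have "d - e \<in> W"
      using d e W by (auto intro: subspace_diff)
    then show "(\<lambda>y. reflection (d - e) (sgn (w y))) ` (sphere 0 1 \<inter> W) \<subseteq> sphere 0 1 \<inter> W"
      using w(3,4) W by (auto simp: norm_sgn sgn_div_norm reflection_in_subspace subspace_scale)
    show "reflection (d - e) (sgn (w (- y))) = - reflection (d - e) (sgn (w y))" for y
      by (simp add: w(2) sgn_minus reflection_minus)
    show "reflection (d - e) (sgn (w y)) \<bullet> e = 0" if "y \<in> sphere 0 1 \<inter> W" "\<bar>y \<bullet> d\<bar> \<le> c" for y
      using d e w(5)[OF that(2)] by (simp add: inner_reflection_diff sgn_div_norm)
  qed
qed

lemma compact_subset_sphere_in_band:
  fixes K :: "'a::real_inner set"
  assumes "compact K" "K \<subseteq> sphere 0 1" and d: "norm d = 1" "d \<notin> K" "-d \<notin> K"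
  obtains c where "0 \<le> c" "c < 1" "\<And>y. y \<in> K \<Longrightarrow> \<bar>y \<bullet> d\<bar> \<le> c"
proof (cases "K = {}")
  case False
  have less_1: "\<bar>y \<bullet> d\<bar> < 1" if y: "y \<in> K" for y
  proof -
    have "norm y = 1"
      using assms(2) y by auto
    moreover have "y \<noteq> d" "y \<noteq> -d"
      using d y by auto
    ultimately have "\<bar>y \<bullet> d\<bar> \<noteq> norm y * norm d"
      using d(1) unfolding norm_cauchy_schwarz_abs_eq by auto
    then show ?thesis
      using Cauchy_Schwarz_ineq2[of y d] \<open>norm y = 1\<close> d(1) by simp
  qed
  have "continuous_on K (\<lambda>y. \<bar>y \<bullet> d\<bar>)"
    by (intro continuous_intros)
  then obtain y0 where "y0 \<in> K" "\<And>y. y \<in> K \<Longrightarrow> \<bar>y \<bullet> d\<bar> \<le> \<bar>y0 \<bullet> d\<bar>"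
    using continuous_attains_sup[OF \<open>compact K\<close> False] by blast
  then show thesis
    using that[of "\<bar>y0 \<bullet> d\<bar>"] less_1 by auto
qed (use that[of 0] in auto)

lemma odd_sphere_map_homotopic_compressible:
  fixes \<phi> :: "'a::euclidean_space \<Rightarrow> 'a"
  assumes U: "subspace U" and W: "subspace W" and UW: "dim U < dim W" "U \<subseteq> W"
    and e: "e \<in> sphere 0 1 \<inter> W"
    and cont: "continuous_on (sphere 0 1 \<inter> W) \<phi>" and \<phi>W: "\<phi> ` (sphere 0 1 \<inter> W) \<subseteq> sphere 0 1 \<inter> W"
    and odd: "\<And>x. x \<in> sphere 0 1 \<inter> W \<Longrightarrow> \<phi> (-x) = - \<phi> x"
  obtains h \<Psi> where
    "continuous_on (sphere 0 1 \<inter> W) h" "h ` (sphere 0 1 \<inter> W) \<subseteq> sphere 0 1 \<inter> W"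
    "\<And>x. h (-x) = - h x" "homotopic_with_canon (\<lambda>_. True) (sphere 0 1 \<inter> W) (sphere 0 1 \<inter> W) \<phi> h"
    "continuous_on (sphere 0 1 \<inter> W) \<Psi>" "\<Psi> ` (sphere 0 1 \<inter> W) \<subseteq> sphere 0 1 \<inter> W"
    "\<And>x. \<Psi> (-x) = - \<Psi> x" "\<And>x. x \<in> sphere 0 1 \<inter> U \<Longrightarrow> \<Psi> (h x) \<bullet> e = 0"
proof -
  obtain h d where h: "continuous_on (sphere 0 1 \<inter> W) h" "h ` (sphere 0 1 \<inter> W) \<subseteq> sphere 0 1 \<inter> W"
      "\<And>x. h (-x) = - h x" "homotopic_with_canon (\<lambda>_. True) (sphere 0 1 \<inter> W) (sphere 0 1 \<inter> W) \<phi> h"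
    and d: "d \<in> sphere 0 1 \<inter> W" "d \<notin> h ` (sphere 0 1 \<inter> U)"
    using odd_sphere_map_homotopic_missing_subsphere[of U W \<phi>, OF U W UW cont \<phi>W odd] by blast
  define K where "K = h ` (sphere 0 1 \<inter> U)"
  have KW: "K \<subseteq> sphere 0 1 \<inter> W"
    using h(2) UW(2) by (auto simp: K_def)
  have "compact (sphere 0 1 \<inter> U)"
    by (simp add: U closed_subspace compact_Int_closed)
  then have "compact K"
    unfolding K_def using UW(2) by (intro compact_continuous_image continuous_on_subset[OF h(1)]) auto
  moreover have "-d \<notin> K"
  proof
    assume "-d \<in> K"
    then obtain x where x: "x \<in> sphere 0 1 \<inter> U" "h x = -d"
      by (auto simp: K_def)
    then have "h (-x) = d"
      using h(3) by simp
    moreover have "-x \<in> sphere 0 1 \<inter> U"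
      using x(1) U subspace_neg by auto
    ultimately show False
      using d(2) by blast
  qed
  ultimately obtain c where c: "0 \<le> c" "c < 1" and band: "\<And>y. y \<in> K \<Longrightarrow> \<bar>y \<bullet> d\<bar> \<le> c"
    using compact_subset_sphere_in_band[of K d] KW d by (auto simp: K_def)
  obtain \<Psi> where "continuous_on (sphere 0 1 \<inter> W) \<Psi>" "\<Psi> ` (sphere 0 1 \<inter> W) \<subseteq> sphere 0 1 \<inter> W"
    "\<And>y. \<Psi> (-y) = - \<Psi> y" and \<Psi>e: "\<And>y. y \<in> sphere 0 1 \<inter> W \<Longrightarrow> \<bar>y \<bullet> d\<bar> \<le> c \<Longrightarrow> \<Psi> y \<bullet> e = 0"
    using sphere_band_collapse[OF W d(1) e c] by blast
  moreover have "\<Psi> (h x) \<bullet> e = 0" if "x \<in> sphere 0 1 \<inter> U" for x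
  proof -
    have "h x \<in> K"
      using that by (simp add: K_def)
    then show ?thesis
      using KW by (blast intro: \<Psi>e band)
  qed
  ultimately show thesis
    using that h by blast
qed

section \<open>Mod 2 degree on coordinate spheres\<close>

lemma topspace_nsphere_iff:
  "x \<in> topspace (nsphere k) \<longleftrightarrow> (\<Sum>i\<le>k. (x i)\<^sup>2) = 1 \<and> (\<forall>i>k. x i = 0)"
  by (simp add: nsphere)

text \<open>
  Coordinates with respect to an enumeration \<open>b 0, \<dots>, b (DIM('a) - 1)\<close> of \<open>Basis\<close>
  identify \<open>flag_sphere k\<close> with \<open>nsphere k\<close>; \<open>degree2\<close> transports
  \<open>Brouwer_degree2\<close> along this identification.
\<close>

locale basis_enumeration =
  fixes b :: "nat \<Rightarrow> 'a::euclidean_space"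
  assumes bij_betw_Basis: "bij_betw b {..<DIM('a)} Basis"
begin

lemma b_in_Basis: "i < DIM('a) \<Longrightarrow> b i \<in> Basis"
  using bij_betw_Basis by (auto simp: bij_betw_def)

lemma inj_on_b: "inj_on b {..<DIM('a)}"
  using bij_betw_Basis by (simp add: bij_betw_def)

lemma inner_b: "i < DIM('a) \<Longrightarrow> j < DIM('a) \<Longrightarrow> b i \<bullet> b j = (if i = j then 1 else 0)"
  using b_in_Basis inj_on_b by (auto simp: inner_Basis inj_on_def)

lemma sum_b: "(\<Sum>i<DIM('a). f (b i)) = (\<Sum>u\<in>Basis. f u)"
  using sum.reindex[OF inj_on_b, of f] bij_betw_Basis by (simp add: bij_betw_def)

definition of_coords :: "(nat \<Rightarrow> real) \<Rightarrow> 'a" where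
  "of_coords x = (\<Sum>i<DIM('a). x i *\<^sub>R b i)"

definition coords :: "'a \<Rightarrow> nat \<Rightarrow> real" where
  "coords y i = (if i < DIM('a) then y \<bullet> b i else 0)"

lemma of_coords_minus: "of_coords (\<lambda>i. - x i) = - of_coords x"
  by (simp add: of_coords_def sum_negf)

lemma coords_minus: "coords (- y) = (\<lambda>i. - coords y i)"
  by (simp add: coords_def fun_eq_iff)

lemma inner_sum_b:
  assumes "m \<le> DIM('a)" "j < DIM('a)"
  shows "(\<Sum>i<m. x i *\<^sub>R b i) \<bullet> b j = (if j < m then x j else 0)"
proof -
  have "(\<Sum>i<m. x i *\<^sub>R b i) \<bullet> b j = (\<Sum>i<m. if i = j then x i else 0)"
    unfolding inner_sum_left using assms by (intro sum.cong) (auto simp: inner_b)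
  then show ?thesis
    by simp
qed

lemma inner_of_coords: "j < DIM('a) \<Longrightarrow> of_coords x \<bullet> b j = x j"
  by (simp add: of_coords_def inner_sum_b)

lemma of_coords_coords [simp]: "of_coords (coords y) = y"
proof -
  have "of_coords (coords y) = (\<Sum>i<DIM('a). (y \<bullet> b i) *\<^sub>R b i)"
    by (simp add: of_coords_def coords_def)
  also have "\<dots> = (\<Sum>u\<in>Basis. (y \<bullet> u) *\<^sub>R u)"
    by (rule sum_b)
  finally show ?thesis
    by (simp add: euclidean_representation)
qed

lemma norm_power2_eq_sum_b: "(norm y)\<^sup>2 = (\<Sum>i<DIM('a). (y \<bullet> b i)\<^sup>2)"
proof -
  have "(norm y)\<^sup>2 = y \<bullet> y"
    by (rule power2_norm_eq_inner)
  also have "\<dots> = (\<Sum>u\<in>Basis. (y \<bullet> u) * (y \<bullet> u))"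
    by (rule euclidean_inner)
  also have "\<dots> = (\<Sum>u\<in>Basis. (y \<bullet> u)\<^sup>2)"
    by (simp add: power2_eq_square)
  also have "\<dots> = (\<Sum>i<DIM('a). (y \<bullet> b i)\<^sup>2)"
    by (rule sum_b[symmetric])
  finally show ?thesis .
qed

definition flag :: "nat \<Rightarrow> 'a set" where
  "flag k = {y. \<forall>i. k < i \<and> i < DIM('a) \<longrightarrow> y \<bullet> b i = 0}"

abbreviation flag_sphere :: "nat \<Rightarrow> 'a set" where
  "flag_sphere k \<equiv> sphere 0 1 \<inter> flag k"

lemma subspace_flag: "subspace (flag k)"
  by (auto simp: subspace_def flag_def inner_add_left)

lemma flag_mono: "k \<le> l \<Longrightarrow> flag k \<subseteq> flag l"
  by (auto simp: flag_def)

lemma flag_top: "DIM('a) = Suc k \<Longrightarrow> flag k = UNIV"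
  by (auto simp: flag_def)

lemma flag_SucD:
  assumes "y \<in> flag (Suc k)" "y \<bullet> b (Suc k) = 0"
  shows "y \<in> flag k"
  unfolding flag_def
proof clarify
  fix i assume "k < i" "i < DIM('a)"
  then show "y \<bullet> b i = 0"
    using assms by (cases "i = Suc k") (auto simp: flag_def)
qed

lemma b_in_flag: "i < DIM('a) \<Longrightarrow> i \<le> k \<Longrightarrow> b i \<in> flag k"
  by (auto simp: flag_def inner_b)

lemma flag_expansion:
  assumes "k < DIM('a)" "y \<in> flag k"
  shows "y = (\<Sum>i\<le>k. (y \<bullet> b i) *\<^sub>R b i)"
proof -
  have "y = (\<Sum>i<DIM('a). (y \<bullet> b i) *\<^sub>R b i)"
    using of_coords_coords[of y] by (simp add: of_coords_def coords_def)
  also have "\<dots> = (\<Sum>i\<le>k. (y \<bullet> b i) *\<^sub>R b i)"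
    using assms by (intro sum.mono_neutral_right) (auto simp: flag_def)
  finally show ?thesis .
qed

lemma dim_flag:
  assumes "k < DIM('a)"
  shows "dim (flag k) = Suc k"
proof -
  have span: "flag k = span (b ` {..k})"
  proof
    show "span (b ` {..k}) \<subseteq> flag k"
      using assms by (intro span_minimal subspace_flag) (auto intro: b_in_flag)
    show "flag k \<subseteq> span (b ` {..k})"
    proof
      fix y assume "y \<in> flag k"
      then have "y = (\<Sum>i\<le>k. (y \<bullet> b i) *\<^sub>R b i)"
        by (rule flag_expansion[OF assms])
      also have "\<dots> \<in> span (b ` {..k})"
        by (intro span_sum span_scale span_base) auto
      finally show "y \<in> span (b ` {..k})" .
    qed
  qed
  have ind: "independent (b ` {..k})"
    using assms b_in_Basis by (intro independent_mono[OF independent_Basis]) auto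
  have card: "card (b ` {..k}) = Suc k"
    using assms by (subst card_image) (auto intro: inj_on_subset[OF inj_on_b])
  show ?thesis
    using dim_span_eq_card_independent[OF ind] card span by simp
qed

lemma of_coords_in_flag_sphere:
  assumes "k < DIM('a)" "x \<in> topspace (nsphere k)"
  shows "of_coords x \<in> flag_sphere k"
proof -
  have x0: "\<And>i. i > k \<Longrightarrow> x i = 0" and x1: "(\<Sum>i\<le>k. (x i)\<^sup>2) = 1"
    using assms(2) by (auto simp: topspace_nsphere_iff)
  have "(norm (of_coords x))\<^sup>2 = (\<Sum>i<DIM('a). (x i)\<^sup>2)"
    by (simp add: norm_power2_eq_sum_b inner_of_coords)
  also have "\<dots> = (\<Sum>i\<le>k. (x i)\<^sup>2)"
    using assms(1) x0 by (intro sum.mono_neutral_right) auto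
  finally have "norm (of_coords x) = 1"
    using x1 norm_ge_zero[of "of_coords x"] by (simp add: power2_eq_1_iff)
  moreover have "of_coords x \<in> flag k"
    using x0 by (auto simp: flag_def inner_of_coords)
  ultimately show ?thesis
    by simp
qed

lemma coords_in_nsphere:
  assumes "k < DIM('a)" "y \<in> flag_sphere k"
  shows "coords y \<in> topspace (nsphere k)"
proof -
  have "1 = (norm y)\<^sup>2"
    using assms(2) by simp
  also have "\<dots> = (\<Sum>i\<le>k. (y \<bullet> b i)\<^sup>2)"
    unfolding norm_power2_eq_sum_b using assms
    by (intro sum.mono_neutral_right) (auto simp: flag_def)
  also have "\<dots> = (\<Sum>i\<le>k. (coords y i)\<^sup>2)"
    using assms(1) by (intro sum.cong) (auto simp: coords_def)
  finally have "(\<Sum>i\<le>k. (coords y i)\<^sup>2) = 1"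
    by simp
  moreover have "\<forall>i>k. coords y i = 0"
    using assms(2) by (auto simp: coords_def flag_def)
  ultimately show ?thesis
    by (simp add: topspace_nsphere_iff)
qed

lemma continuous_map_of_coords:
  assumes "k < DIM('a)"
  shows "continuous_map (nsphere k) (top_of_set (flag_sphere k)) of_coords"
proof -
  have "continuous_on UNIV of_coords"
    unfolding of_coords_def
    by (intro continuous_on_sum continuous_on_scaleR continuous_on_product_coordinates continuous_on_const)
  then have "continuous_map euclidean euclidean of_coords"
    by simp
  then have "continuous_map (nsphere k) euclidean of_coords"
    unfolding nsphere euclidean_product_topology[symmetric]
    by (rule continuous_map_from_subtopology)
  then show ?thesis
    using of_coords_in_flag_sphere[OF assms] by (auto simp: continuous_map_in_subtopology)
qed

lemma continuous_map_coords:
  assumes "k < DIM('a)"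
  shows "continuous_map (top_of_set (flag_sphere k)) (nsphere k) coords"
proof -
  have "continuous_on UNIV (\<lambda>y. coords y i)" for i
    by (cases "i < DIM('a)") (simp_all add: coords_def continuous_on_inner)
  then have "continuous_map (top_of_set (flag_sphere k)) (powertop_real UNIV) coords"
    unfolding continuous_map_componentwise_UNIV
    by (auto intro: continuous_on_subset)
  moreover have "coords ` flag_sphere k \<subseteq> {x. (\<Sum>i\<le>k. (x i)\<^sup>2) = 1 \<and> (\<forall>i>k. x i = 0)}"
    using coords_in_nsphere[OF assms] by (auto simp: topspace_nsphere_iff)
  ultimately show ?thesis
    unfolding nsphere by (simp add: continuous_map_in_subtopology image_subset_iff_funcset)
qed

definition degree2 :: "nat \<Rightarrow> ('a \<Rightarrow> 'a) \<Rightarrow> int" where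
  "degree2 k \<phi> = Brouwer_degree2 k (coords \<circ> \<phi> \<circ> of_coords)"

lemma continuous_map_conjugate:
  assumes "k < DIM('a)" "continuous_on (flag_sphere k) \<phi>" "\<phi> ` flag_sphere k \<subseteq> flag_sphere k"
  shows "continuous_map (nsphere k) (nsphere k) (coords \<circ> \<phi> \<circ> of_coords)"
proof -
  have "continuous_map (top_of_set (flag_sphere k)) (top_of_set (flag_sphere k)) \<phi>"
    using assms(2,3) by (auto simp: continuous_map_in_subtopology)
  then show ?thesis
    using continuous_map_of_coords[OF assms(1)] continuous_map_coords[OF assms(1)]
    by (metis continuous_map_compose o_assoc)
qed

lemma degree2_homotopic:
  assumes "k < DIM('a)"
    and "homotopic_with_canon (\<lambda>_. True) (flag_sphere k) (flag_sphere k) \<phi> \<psi>"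
  shows "degree2 k \<phi> = degree2 k \<psi>"
proof -
  have "homotopic_with (\<lambda>_. True) (top_of_set (flag_sphere k)) (nsphere k) (coords \<circ> \<phi>) (coords \<circ> \<psi>)"
    using assms(2) continuous_map_coords[OF assms(1)] by (rule homotopic_with_compose_continuous_map_left) auto
  then have "homotopic_with (\<lambda>_. True) (nsphere k) (nsphere k)
      (coords \<circ> \<phi> \<circ> of_coords) (coords \<circ> \<psi> \<circ> of_coords)"
    using continuous_map_of_coords[OF assms(1)] by (rule homotopic_with_compose_continuous_map_right) auto
  then show ?thesis
    unfolding degree2_def by (rule Brouwer_degree2_homotopic)
qed

lemma degree2_compose:
  assumes "k < DIM('a)"
    and "continuous_on (flag_sphere k) \<phi>" "\<phi> ` flag_sphere k \<subseteq> flag_sphere k"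
    and "continuous_on (flag_sphere k) \<psi>" "\<psi> ` flag_sphere k \<subseteq> flag_sphere k"
  shows "degree2 k (\<psi> \<circ> \<phi>) = degree2 k \<psi> * degree2 k \<phi>"
proof -
  have "coords \<circ> (\<psi> \<circ> \<phi>) \<circ> of_coords = (coords \<circ> \<psi> \<circ> of_coords) \<circ> (coords \<circ> \<phi> \<circ> of_coords)"
    by (simp add: fun_eq_iff)
  then show ?thesis
    unfolding degree2_def
    using Brouwer_degree2_compose[OF continuous_map_conjugate[OF assms(1-3)]
        continuous_map_conjugate[OF assms(1,4,5)]]
    by simp
qed

lemma degree2_nonsurjective:
  assumes "k < DIM('a)" "continuous_on (flag_sphere k) \<phi>" "\<phi> ` flag_sphere k \<subseteq> flag_sphere k"
    and "y \<in> flag_sphere k" "y \<notin> \<phi> ` flag_sphere k"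
  shows "degree2 k \<phi> = 0"
  unfolding degree2_def
proof (rule Brouwer_degree2_nonsurjective[OF continuous_map_conjugate[OF assms(1-3)]])
  have "coords y \<notin> (coords \<circ> \<phi> \<circ> of_coords) ` topspace (nsphere k)"
  proof
    assume "coords y \<in> (coords \<circ> \<phi> \<circ> of_coords) ` topspace (nsphere k)"
    then obtain x where x: "x \<in> topspace (nsphere k)" and "coords y = coords (\<phi> (of_coords x))"
      by auto
    then have "y = \<phi> (of_coords x)"
      by (metis of_coords_coords)
    then show False
      using assms(5) of_coords_in_flag_sphere[OF assms(1) x] by blast
  qed
  then show "(coords \<circ> \<phi> \<circ> of_coords) ` topspace (nsphere k) \<noteq> topspace (nsphere k)"
    using coords_in_nsphere[OF assms(1,4)] by blast
qed

lemma degree2_Suc_parity: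
  assumes "Suc k < DIM('a)"
    and "continuous_on (flag_sphere (Suc k)) \<phi>" "\<phi> ` flag_sphere (Suc k) \<subseteq> flag_sphere (Suc k)"
    and "\<And>x. x \<in> flag_sphere (Suc k) \<Longrightarrow> \<phi> (-x) = - \<phi> x"
    and "\<phi> ` flag_sphere k \<subseteq> flag_sphere k"
  shows "even (degree2 (Suc k) \<phi> - degree2 k \<phi>)"
proof -
  let ?F = "coords \<circ> \<phi> \<circ> of_coords"
  have "even (Brouwer_degree2 (Suc k) ?F - Brouwer_degree2 (Suc k - Suc 0) ?F)"
  proof (rule Borsuk_odd_mapping_degree_step)
    show "continuous_map (nsphere (Suc k)) (nsphere (Suc k)) ?F"
      by (rule continuous_map_conjugate[OF assms(1-3)])
    show "(?F \<circ> (\<lambda>x i. - x i)) u = ((\<lambda>x i. - x i) \<circ> ?F) u"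
      if "u \<in> topspace (nsphere (Suc k))" for u
    proof -
      have "(?F \<circ> (\<lambda>x i. - x i)) u = coords (\<phi> (- of_coords u))"
        by (simp add: of_coords_minus)
      also have "\<dots> = coords (- \<phi> (of_coords u))"
        using assms(4) of_coords_in_flag_sphere[OF assms(1) that] by simp
      finally show ?thesis
        by (simp add: coords_minus)
    qed
    show "?F \<in> topspace (nsphere (Suc k - Suc 0)) \<rightarrow> topspace (nsphere (Suc k - Suc 0))"
    proof
      fix x assume "x \<in> topspace (nsphere (Suc k - Suc 0))"
      then have "of_coords x \<in> flag_sphere k"
        using assms(1) by (intro of_coords_in_flag_sphere) auto
      then have "\<phi> (of_coords x) \<in> flag_sphere k"
        using assms(5) by blast
      then show "?F x \<in> topspace (nsphere (Suc k - Suc 0))"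
        using assms(1) coords_in_nsphere[of k] by simp
    qed
  qed
  then show ?thesis
    by (simp add: degree2_def)
qed

lemma flag_sphere_0: "flag_sphere 0 = {b 0, - b 0}"
proof
  have b0: "b 0 \<in> flag_sphere 0"
    using b_in_Basis[of 0] b_in_flag[of 0 0] by simp
  then show "{b 0, - b 0} \<subseteq> flag_sphere 0"
    using subspace_neg[OF subspace_flag] by auto
  show "flag_sphere 0 \<subseteq> {b 0, - b 0}"
  proof
    fix y assume y: "y \<in> flag_sphere 0"
    then have "y = (y \<bullet> b 0) *\<^sub>R b 0"
      using flag_expansion[of 0 y] by simp
    moreover have "\<bar>y \<bullet> b 0\<bar> = 1"
      using y b0 by (metis IntD1 calculation mem_sphere_0 mult.right_neutral norm_scaleR)
    ultimately show "y \<in> {b 0, - b 0}"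
      by (metis abs_if insert_iff minus_minus scaleR_minus1_left scaleR_one)
  qed
qed

lemma coords_of_coords:
  assumes "k < DIM('a)" "x \<in> topspace (nsphere k)"
  shows "coords (of_coords x) = x"
proof (rule ext)
  fix i
  show "coords (of_coords x) i = x i"
    using assms by (cases "i < DIM('a)") (auto simp: coords_def inner_of_coords topspace_nsphere_iff)
qed

lemma odd_degree2_flag0:
  assumes maps: "\<phi> ` flag_sphere 0 \<subseteq> flag_sphere 0"
    and odd: "\<And>x. x \<in> flag_sphere 0 \<Longrightarrow> \<phi> (-x) = - \<phi> x"
  shows "odd (degree2 0 \<phi>)"
proof -
  have pos: "0 < DIM('a)"
    by simp
  have "\<phi> (b 0) = b 0 \<or> \<phi> (b 0) = - b 0"
    using maps flag_sphere_0 by blast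
  then consider "\<And>y. y \<in> flag_sphere 0 \<Longrightarrow> \<phi> y = y" | "\<And>y. y \<in> flag_sphere 0 \<Longrightarrow> \<phi> y = - y"
    using odd flag_sphere_0 by force
  then show ?thesis
  proof cases
    case 1
    have "degree2 0 \<phi> = Brouwer_degree2 0 id"
      unfolding degree2_def
    proof (rule Brouwer_degree2_eq)
      fix x assume x: "x \<in> topspace (nsphere 0)"
      then have "\<phi> (of_coords x) = of_coords x"
        using 1 of_coords_in_flag_sphere[OF pos] by blast
      then show "(coords \<circ> \<phi> \<circ> of_coords) x = id x"
        by (simp add: coords_of_coords[OF pos x])
    qed
    then show ?thesis
      by simp
  next
    case 2
    have "degree2 0 \<phi> = Brouwer_degree2 0 (\<lambda>x i. if i = 0 then - x i else x i)"
      unfolding degree2_def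
    proof (rule Brouwer_degree2_eq)
      fix x assume x: "x \<in> topspace (nsphere 0)"
      then have "\<phi> (of_coords x) = - of_coords x"
        using 2 of_coords_in_flag_sphere[OF pos] by blast
      then have "(coords \<circ> \<phi> \<circ> of_coords) x = (\<lambda>i. - x i)"
        by (simp add: coords_minus coords_of_coords[OF pos x])
      also have "\<dots> = (\<lambda>i. if i = 0 then - x i else x i)"
        using x by (auto simp: topspace_nsphere_iff)
      finally show "(coords \<circ> \<phi> \<circ> of_coords) x = (\<lambda>i. if i = 0 then - x i else x i)" .
    qed
    then show ?thesis
      by (simp add: Brouwer_degree2_reflection)
  qed
qed

lemma odd_degree2_Suc:
  assumes k: "Suc k < DIM('a)"
    and cont: "continuous_on (flag_sphere (Suc k)) \<phi>"
    and maps: "\<phi> ` flag_sphere (Suc k) \<subseteq> flag_sphere (Suc k)"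
    and odd: "\<And>x. x \<in> flag_sphere (Suc k) \<Longrightarrow> \<phi> (-x) = - \<phi> x"
    and IH: "\<And>\<psi>. continuous_on (flag_sphere k) \<psi> \<Longrightarrow> \<psi> ` flag_sphere k \<subseteq> flag_sphere k \<Longrightarrow>
      (\<And>x. x \<in> flag_sphere k \<Longrightarrow> \<psi> (-x) = - \<psi> x) \<Longrightarrow> odd (degree2 k \<psi>)"
  shows "odd (degree2 (Suc k) \<phi>)"
proof -
  have "dim (flag k) < dim (flag (Suc k))"
    using dim_flag k by simp
  moreover have "b (Suc k) \<in> flag_sphere (Suc k)"
    using b_in_Basis[OF k] b_in_flag[OF k] by simp
  ultimately obtain h \<Psi> where
    h: "continuous_on (flag_sphere (Suc k)) h" "h ` flag_sphere (Suc k) \<subseteq> flag_sphere (Suc k)"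
      "\<And>x. h (-x) = - h x" "homotopic_with_canon (\<lambda>_. True) (flag_sphere (Suc k)) (flag_sphere (Suc k)) \<phi> h"
    and \<Psi>: "continuous_on (flag_sphere (Suc k)) \<Psi>" "\<Psi> ` flag_sphere (Suc k) \<subseteq> flag_sphere (Suc k)"
      "\<And>x. \<Psi> (-x) = - \<Psi> x"
    and \<Psi>h: "\<And>x. x \<in> flag_sphere k \<Longrightarrow> \<Psi> (h x) \<bullet> b (Suc k) = 0"
    using odd_sphere_map_homotopic_compressible[of "flag k" "flag (Suc k)" "b (Suc k)" \<phi>,
        OF subspace_flag subspace_flag _ flag_mono _ cont maps odd]
    by auto
  have sub: "flag_sphere k \<subseteq> flag_sphere (Suc k)"
    using flag_mono[of k "Suc k"] by auto
  have g_cont: "continuous_on (flag_sphere (Suc k)) (\<Psi> \<circ> h)"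
    using h(1,2) by (intro continuous_on_compose continuous_on_subset[OF \<Psi>(1)]) auto
  have g_maps: "(\<Psi> \<circ> h) ` flag_sphere (Suc k) \<subseteq> flag_sphere (Suc k)"
    using h(2) \<Psi>(2) by (auto simp: image_subset_iff)
  have g_odd: "(\<Psi> \<circ> h) (-x) = - (\<Psi> \<circ> h) x" for x
    by (simp add: h(3) \<Psi>(3))
  have g_lower: "(\<Psi> \<circ> h) ` flag_sphere k \<subseteq> flag_sphere k"
  proof (rule image_subsetI)
    fix x assume x: "x \<in> flag_sphere k"
    then have "(\<Psi> \<circ> h) x \<in> flag_sphere (Suc k)"
      using g_maps sub by blast
    then show "(\<Psi> \<circ> h) x \<in> flag_sphere k"
      using \<Psi>h[OF x] flag_SucD by simp
  qed
  have "odd (degree2 k (\<Psi> \<circ> h))"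
    using IH[OF continuous_on_subset[OF g_cont sub] g_lower] g_odd by blast
  moreover have "even (degree2 (Suc k) (\<Psi> \<circ> h) - degree2 k (\<Psi> \<circ> h))"
    using degree2_Suc_parity[OF k g_cont g_maps _ g_lower] g_odd by blast
  ultimately have "odd (degree2 (Suc k) \<Psi> * degree2 (Suc k) h)"
    using degree2_compose[OF k h(1,2) \<Psi>(1,2)] by simp
  then show ?thesis
    using degree2_homotopic[OF k h(4)] by simp
qed

theorem odd_degree2_odd_map:
  "k < DIM('a) \<Longrightarrow> continuous_on (flag_sphere k) \<phi> \<Longrightarrow> \<phi> ` flag_sphere k \<subseteq> flag_sphere k \<Longrightarrow>
    (\<And>x. x \<in> flag_sphere k \<Longrightarrow> \<phi> (-x) = - \<phi> x) \<Longrightarrow> odd (degree2 k \<phi>)"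
proof (induction k arbitrary: \<phi>)
  case 0
  then show ?case
    by (intro odd_degree2_flag0)
next
  case (Suc k)
  then show ?case
    by (intro odd_degree2_Suc) auto
qed

end

section \<open>The Borsuk--Ulam theorem\<close>

lemma ex_basis_enumeration: "\<exists>b :: nat \<Rightarrow> 'a::euclidean_space. basis_enumeration b"
  using ex_bij_betw_nat_finite[of "Basis :: 'a set"] by (auto simp: basis_enumeration_def atLeast0LessThan)

theorem odd_sphere_map_homotopic_surjective:
  fixes \<phi> \<psi> :: "'a::euclidean_space \<Rightarrow> 'a"
  assumes cont: "continuous_on (sphere 0 1) \<phi>" and maps: "\<phi> ` sphere 0 1 \<subseteq> sphere 0 1"
    and odd: "\<And>x. x \<in> sphere 0 1 \<Longrightarrow> \<phi> (-x) = - \<phi> x"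
    and hom: "homotopic_with_canon (\<lambda>_. True) (sphere 0 1) (sphere 0 1) \<phi> \<psi>"
  shows "\<psi> ` sphere 0 1 = sphere 0 1"
proof -
  obtain b :: "nat \<Rightarrow> 'a" where "basis_enumeration b"
    using ex_basis_enumeration by blast
  then interpret basis_enumeration b .
  define k where "k = DIM('a) - 1"
  have k: "k < DIM('a)" and top: "flag_sphere k = sphere 0 1"
    using flag_top[of k] by (simp_all add: k_def)
  have "odd (degree2 k \<phi>)"
    using odd_degree2_odd_map[OF k] cont maps odd top by simp
  moreover have "degree2 k \<phi> = degree2 k \<psi>"
    using degree2_homotopic[OF k] hom top by simp
  moreover have "continuous_on (sphere 0 1) \<psi>" "\<psi> ` sphere 0 1 \<subseteq> sphere 0 1"
    using homotopic_with_imp_continuous[OF hom] homotopic_with_imp_subset2[OF hom] by auto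
  ultimately show ?thesis
    using degree2_nonsurjective[OF k] top by fastforce
qed

corollary odd_map_segment_homotopic_sgn_surjective:
  fixes F G :: "'a::euclidean_space \<Rightarrow> 'a"
  assumes F: "continuous_on (sphere 0 1) F" "\<And>v. v \<in> sphere 0 1 \<Longrightarrow> F (-v) = - F v"
    and G: "continuous_on (sphere 0 1) G"
    and segment: "\<And>v. v \<in> sphere 0 1 \<Longrightarrow> 0 \<notin> closed_segment (F v) (G v)"
  shows "(\<lambda>v. sgn (G v)) ` sphere 0 1 = sphere 0 1"
proof -
  have F_nz: "F v \<noteq> 0" if "v \<in> sphere 0 1" for v
    using segment[OF that] by auto
  have "homotopic_with_canon (\<lambda>_. True) (sphere 0 1) (sphere 0 1 \<inter> UNIV) (\<lambda>v. sgn (F v)) (\<lambda>v. sgn (G v))"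
    using segment by (intro homotopic_sgn_linear subspace_UNIV F(1) G) auto
  then show ?thesis
    using F_nz F(2)
    by (intro odd_sphere_map_homotopic_surjective) (auto simp: norm_sgn sgn_minus intro!: continuous_intros F(1))
qed

section \<open>The cube in the image\<close>

lemma infdist_uminus: "infdist (- x) A = infdist x (uminus ` A)"
  for x :: "'a::real_normed_vector"
proof -
  have "(\<lambda>a. dist (- x) a) = (\<lambda>a. dist x (- a))"
    by (metis dist_minus minus_minus)
  then show ?thesis
    by (simp add: infdist_def image_image)
qed

lemma odd_function_separating:
  fixes X P :: "'a::real_normed_vector set"
  assumes X: "closed X" "\<And>x. x \<in> X \<Longrightarrow> -x \<in> X"
    and P: "openin (top_of_set X) P" and disj: "P \<inter> uminus ` P = {}"
  obtains s :: "'a \<Rightarrow> real" where "continuous_on UNIV s" "\<And>x. s (-x) = - s x"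
    "\<And>x. x \<in> P \<Longrightarrow> 0 < s x" "\<And>x. x \<in> uminus ` P \<Longrightarrow> s x < 0"
proof -
  define s where "s x = infdist x (X - P) - infdist x (X - uminus ` P)" for x
  have symmetric: "uminus ` X = X"
    using X(2) by (force intro: image_eqI[where x="- x" for x])
  have odd: "s (-x) = - s x" for x
  proof -
    have "uminus ` (X - P) = X - uminus ` P" "uminus ` (X - uminus ` P) = X - P"
      using symmetric by (auto simp: image_set_diff image_image)
    then show ?thesis
      by (simp add: s_def infdist_uminus)
  qed
  have pos: "0 < s x" if x: "x \<in> P" for x
  proof -
    have "x \<in> X"
      using P x openin_imp_subset by auto
    moreover have "-x \<notin> P"
    proof
      assume "-x \<in> P"
      then have "x \<in> uminus ` P"
        by (metis image_eqI minus_minus)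
      then show False
        using x disj by blast
    qed
    ultimately have "-x \<in> X - P"
      using X(2) by blast
    moreover have "closed (X - P)"
      using closedin_closed_trans[OF closedin_diff[OF closedin_topspace P]] X(1) by simp
    ultimately have "0 < infdist x (X - P)"
      using x by (intro infdist_pos_not_in_closed) auto
    moreover have "x \<in> X - uminus ` P"
      using \<open>x \<in> X\<close> x disj by auto
    ultimately show ?thesis
      by (simp add: s_def)
  qed
  show thesis
  proof
    show "continuous_on UNIV s"
      unfolding s_def by (intro continuous_intros)
    show "s (-x) = - s x" for x
      by (rule odd)
    show "0 < s x" if "x \<in> P" for x
      using pos that .
    show "s x < 0" if "x \<in> uminus ` P" for x
      using that pos odd by force
  qed
qed

lemma open_cube_in_image:
  fixes f :: "nat \<Rightarrow> 'a::euclidean_space \<Rightarrow> real" and s :: "'a \<Rightarrow> real"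
  assumes dim: "m < DIM('a)"
    and cont: "\<And>i. i < m \<Longrightarrow> continuous_on (sphere 0 1) (f i)" "continuous_on (sphere 0 1) s"
    and odd: "\<And>i v. i < m \<Longrightarrow> v \<in> sphere 0 1 \<Longrightarrow> f i (- v) = - f i v" "\<And>v. s (- v) = - s v"
    and s_zero: "\<And>v. v \<in> sphere 0 1 \<Longrightarrow> s v = 0 \<Longrightarrow> \<exists>i<m. 1 \<le> \<bar>f i v\<bar>"
    and t: "\<And>i. i < m \<Longrightarrow> \<bar>t i\<bar> < 1"
  shows "\<exists>v \<in> sphere 0 1. \<forall>i<m. f i v = t i"
proof (rule ccontr)
  assume miss: "\<not> (\<exists>v \<in> sphere 0 1. \<forall>i<m. f i v = t i)"
  obtain b :: "nat \<Rightarrow> 'a" where "basis_enumeration b"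
    using ex_basis_enumeration by blast
  then interpret basis_enumeration b .
  define F where "F v = (\<Sum>i<m. f i v *\<^sub>R b i) + s v *\<^sub>R b m" for v
  define G where "G v = (\<Sum>i<m. (f i v - t i) *\<^sub>R b i)" for v
  have F_b: "F v \<bullet> b j = (if j < m then f j v else s v)" if "j \<le> m" for v j
    using that dim by (auto simp: F_def inner_add_left inner_sum_b inner_b)
  have G_b: "G v \<bullet> b j = (if j < m then f j v - t j else 0)" if "j \<le> m" for v j
    using that dim by (simp add: G_def inner_sum_b)
  have "F (- v) = - F v" if "v \<in> sphere 0 1" for v
  proof -
    have "(\<Sum>i<m. f i (- v) *\<^sub>R b i) = (\<Sum>i<m. - (f i v *\<^sub>R b i))"
      using odd(1) that by (intro sum.cong) auto
    then show ?thesis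
      by (simp add: F_def odd(2) sum_negf algebra_simps)
  qed
  moreover have "0 \<notin> closed_segment (F v) (G v)" if v: "v \<in> sphere 0 1" for v
  proof
    assume "0 \<in> closed_segment (F v) (G v)"
    then obtain u where u: "0 \<le> u" "u \<le> 1" and z: "(1 - u) *\<^sub>R F v + u *\<^sub>R G v = 0"
      by (auto simp: closed_segment_def)
    have comp: "(1 - u) * (F v \<bullet> b j) + u * (G v \<bullet> b j) = 0" for j
      using arg_cong[OF z, of "\<lambda>w. w \<bullet> b j"] by (simp add: inner_add_left)
    have fu: "f i v = u * t i" if "i < m" for i
      using comp[of i] that by (simp add: F_b G_b algebra_simps)
    show False
    proof (cases "u = 1")
      case True
      then have "\<forall>i<m. f i v = t i"
        using fu by simp
      then show False
        using miss v by blast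
    next
      case False
      then have "s v = 0"
        using comp[of m] by (simp add: F_b G_b)
      then obtain i where "i < m" "1 \<le> \<bar>f i v\<bar>"
        using s_zero[OF v] by blast
      moreover have "\<bar>u * t i\<bar> \<le> \<bar>t i\<bar>"
        using u by (simp add: abs_mult mult_left_le_one_le)
      ultimately show False
        using fu t[of i] by simp
    qed
  qed
  moreover have "continuous_on (sphere 0 1) F" "continuous_on (sphere 0 1) G"
    unfolding F_def G_def by (intro continuous_intros cont; simp)+
  ultimately have "(\<lambda>v. sgn (G v)) ` sphere 0 1 = sphere 0 1"
    by (intro odd_map_segment_homotopic_sgn_surjective)
  moreover have "b m \<in> sphere 0 1"
    using b_in_Basis[OF dim] by simp
  ultimately obtain v where "b m = sgn (G v)"
    by blast
  moreover have "sgn (G v) \<bullet> b m = 0"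
    by (simp add: sgn_div_norm G_b)
  ultimately show False
    using inner_b[OF dim dim] by simp
qed

lemma nonpos_if_le_small_multiples:
  fixes x c :: real
  assumes "\<And>\<eta>. 0 < \<eta> \<Longrightarrow> \<eta> \<le> 1 \<Longrightarrow> x \<le> \<eta> * c"
  shows "x \<le> 0"
proof (rule field_le_epsilon)
  fix e :: real assume "0 < e"
  define \<eta> where "\<eta> = min 1 (e / (\<bar>c\<bar> + 1))"
  have "x \<le> \<eta> * c"
    using \<open>0 < e\<close> by (intro assms) (auto simp: \<eta>_def)
  also have "\<dots> \<le> \<eta> * \<bar>c\<bar>"
    using \<open>0 < e\<close> by (intro mult_left_mono) (auto simp: \<eta>_def)
  also have "\<dots> \<le> e / (\<bar>c\<bar> + 1) * \<bar>c\<bar>"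
    by (intro mult_right_mono) (auto simp: \<eta>_def)
  also have "\<dots> \<le> e"
    using \<open>0 < e\<close> by (simp add: field_simps)
  finally show "x \<le> 0 + e"
    by simp
qed

lemma closed_cube_in_image:
  fixes f :: "nat \<Rightarrow> 'a::topological_space \<Rightarrow> real"
  assumes S: "compact S" and cont: "\<And>i. i < m \<Longrightarrow> continuous_on S (f i)"
    and open_cube: "\<And>t. (\<And>i. i < m \<Longrightarrow> \<bar>t i\<bar> < 1) \<Longrightarrow> \<exists>v\<in>S. \<forall>i<m. f i v = t i"
    and t: "\<And>i. i < m \<Longrightarrow> \<bar>t i\<bar> \<le> 1"
  shows "\<exists>v\<in>S. \<forall>i<m. f i v = t i"
proof -
  define D where "D v = (\<Sum>i<m. \<bar>f i v - t i\<bar>)" for v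
  have "S \<noteq> {}"
    using open_cube[of "\<lambda>_. 0"] by auto
  moreover have "continuous_on S D"
    unfolding D_def by (intro continuous_intros) (auto intro: cont)
  ultimately obtain v0 where v0: "v0 \<in> S" and min: "\<And>v. v \<in> S \<Longrightarrow> D v0 \<le> D v"
    using continuous_attains_inf[OF S] by blast
  have "D v0 \<le> \<eta> * m" if \<eta>: "0 < \<eta>" "\<eta> \<le> 1" for \<eta> :: real
  proof -
    have "\<bar>(1 - \<eta>) * t i\<bar> < 1" if "i < m" for i
      using t[OF that] \<eta> mult_left_le[of "\<bar>t i\<bar>" "1 - \<eta>"] by (simp add: abs_mult)
    then have "\<exists>v\<in>S. \<forall>i<m. f i v = (1 - \<eta>) * t i"
      by (rule open_cube)
    then obtain v where v: "v \<in> S" "\<forall>i<m. f i v = (1 - \<eta>) * t i"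
      by blast
    have "D v = (\<Sum>i<m. \<eta> * \<bar>t i\<bar>)"
      unfolding D_def
    proof (rule sum.cong)
      fix i assume "i \<in> {..<m}"
      then have "f i v - t i = - (\<eta> * t i)"
        using v(2) by (simp add: algebra_simps)
      then show "\<bar>f i v - t i\<bar> = \<eta> * \<bar>t i\<bar>"
        using \<eta> by (simp add: abs_mult)
    qed simp
    also have "\<dots> \<le> (\<Sum>i<m. \<eta>)"
      using t \<eta> by (intro sum_mono) (simp add: mult_left_le)
    finally show ?thesis
      using min[OF v(1)] by (simp add: mult.commute)
  qed
  then have "D v0 \<le> 0"
    by (rule nonpos_if_le_small_multiples)
  moreover have "0 \<le> D v0"
    by (simp add: D_def sum_nonneg)
  ultimately have "D v0 = 0"
    by simp
  then show ?thesis
    using v0 by (auto simp: D_def sum_nonneg_eq_0_iff)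
qed

theorem theorem1:
  fixes f :: "nat \<Rightarrow> 'a::euclidean_space \<Rightarrow> real"
    and m :: nat
    and \<Omega>p \<Omega>m :: "'a set"
  assumes dim: "DIM('a) = m + 1"
    and m_ge: "m \<ge> 1"
    and cont: "\<And>i. i < m \<Longrightarrow> continuous_on (sphere 0 1) (f i)"
    and odd: "\<And>i v. i < m \<Longrightarrow> v \<in> sphere 0 1 \<Longrightarrow> f i (- v) = - f i v"
    and open_p: "openin (top_of_set (sphere 0 1)) \<Omega>p"
    and open_m: "openin (top_of_set (sphere 0 1)) \<Omega>m"
    and disj: "\<Omega>p \<inter> \<Omega>m = {}"
    and union: "\<Omega>p \<union> \<Omega>m = {v \<in> sphere 0 1. \<forall>i<m. \<bar>f i v\<bar> < 1}"
    and neg: "\<Omega>m = uminus ` \<Omega>p"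
  shows "\<forall>t :: nat \<Rightarrow> real. (\<forall>i<m. -1 \<le> t i \<and> t i \<le> 1) \<longrightarrow>
           (\<exists>v \<in> sphere 0 1. \<forall>i<m. f i v = t i)"
proof (intro allI impI)
  fix t :: "nat \<Rightarrow> real"
  assume "\<forall>i<m. -1 \<le> t i \<and> t i \<le> 1"
  then have t: "\<And>i. i < m \<Longrightarrow> \<bar>t i\<bar> \<le> 1"
    by (simp add: abs_le_iff)
  have "\<And>v :: 'a. v \<in> sphere 0 1 \<Longrightarrow> - v \<in> sphere 0 1"
    by simp
  moreover have "\<Omega>p \<inter> uminus ` \<Omega>p = {}"
    using disj neg by simp
  ultimately obtain s :: "'a \<Rightarrow> real" where s: "continuous_on UNIV s" "\<And>v. s (- v) = - s v"
    and s_pos: "\<And>v. v \<in> \<Omega>p \<Longrightarrow> 0 < s v" and s_neg: "\<And>v. v \<in> uminus ` \<Omega>p \<Longrightarrow> s v < 0"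
    using odd_function_separating[OF closed_sphere _ open_p] by blast
  have s_zero: "\<exists>i<m. 1 \<le> \<bar>f i v\<bar>" if "v \<in> sphere 0 1" "s v = 0" for v
  proof -
    have "v \<notin> \<Omega>p \<union> \<Omega>m"
      using that(2) s_pos s_neg neg by force
    then show ?thesis
      using union that(1) by (auto simp: not_less)
  qed
  have m: "m < DIM('a)"
    using dim by simp
  have s_cont: "continuous_on (sphere 0 1) s"
    using continuous_on_subset[OF s(1)] by simp
  have open_cube: "\<exists>v \<in> sphere 0 1. \<forall>i<m. f i v = t' i" if "\<And>i. i < m \<Longrightarrow> \<bar>t' i\<bar> < 1" for t'
    by (rule open_cube_in_image[OF m cont s_cont odd s(2) s_zero that])
  show "\<exists>v \<in> sphere 0 1. \<forall>i<m. f i v = t i"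
    by (rule closed_cube_in_image[OF compact_sphere cont open_cube t])
qed

end
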